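(* Let $X$ be a finite alphabet with at least two letters and $k\ge2$. For every $F\in\mathcal F_{\mathcal T_k}$, $$\mathcal R\mathbf\Sigma(F)=\{A\circ f_{\mathcal M}\mid \mathcal M\text{ an automaton over }X,\ A:C_{\mathcal M}\to\bar k,\ A\in\mathcal C_{\mathcal M}(F)\}.$$
   Context: Automaton $\mathcal M=(Q,f,in)$: $f_{\mathcal M}(\xi)$ is the set of states visited infinitely often on input $\xi$, $C_{\mathcal M}=\{f_{\mathcal M}(\xi):\xi\in X^\omega\}$. On $C_{\mathcal M}$: $c\le_0 d$ iff some (equivalently every) state of $d$ is reachable from some (equivalently every) state of $c$; $c\le_1 d$ iff $c\supseteq d$. $\mathcal C_{\mathcal M}=(\mathcal C_0,\mathcal C_1)$ where $\mathcal C_i$ is the family of $\le_i$-up subsets of $C_{\mathcal M}$. $\mathcal R$ is the class of regular $\omega$-languages; $\mathcal R\mathbf\Sigma=(\mathcal R\cap\mathbf\Sigma^0_1,\mathcal R\cap\mathbf\Sigma^0_2)$ with $\mathbf\Sigma^0_1$ the open and $\mathbf\Sigma^0_2$ the countable unions of closed subsets of $X^\omega$. Forests: finite $F\subseteq\omega^+$ closed under nonempty prefixes; trees: finite prefix-closed $V\subseteq\omega^*$; $\mathcal F_{\mathcal T_k}$: forests $(F,c)$ whose labels $c(\tau)=(V,v)$ are $\bar k$-labeled trees. For a 2-base $\mathcal L=(\mathcal L_0,\mathcal L_1)$ in $S$ (families closed under finite $\cup,\cap$ containing $\emptyset,S$), an $F$-family is $\{U_\tau\}_{\tau\in F}\subseteq\mathcal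 L_0$ with $U_{\tau i}\subseteq U_\tau$, $\bigcup U_\tau=S$, plus for each $\tau$ with $c(\tau)=(V,v)$ sets $U_{\tau\sigma}=\tilde U_\tau\cap B_{\tau\sigma}$ ($B_{\tau\sigma}\in\mathcal L_1$, $\sigma\in V$) with $U_{\tau\sigma i}\subseteq U_{\tau\sigma}$, $\bigcup_\sigma U_{\tau\sigma}=\tilde U_\tau$, where $\tilde U_\tau=U_\tau\setminus\bigcup_{\tau i\in F}U_{\tau i}$; it determines $A:S\to\bar k$ if $A(x)=v(\sigma)$ whenever $x\in U_{\tau\sigma}\setminus\bigcup_{\sigma i\in V}U_{\tau\sigma i}$. $\mathcal L(F)$ is the set of $k$-partitions of $S$ determined by some $F$-family over $\mathcal L$; this defines both $\mathcal R\mathbf\Sigma(F)$ and $\mathcal C_{\mathcal M}(F)$. *)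

theory Defs
  imports Main
begin

definition automaton :: "nat set \<Rightarrow> (nat \<Rightarrow> 'a \<Rightarrow> nat) \<Rightarrow> nat \<Rightarrow> bool" where
  "automaton Q f i \<longleftrightarrow> finite Q \<and> i \<in> Q \<and> (\<forall>q\<in>Q. \<forall>x. f q x \<in> Q)"

fun run :: "(nat \<Rightarrow> 'a \<Rightarrow> nat) \<Rightarrow> nat \<Rightarrow> (nat \<Rightarrow> 'a) \<Rightarrow> nat \<Rightarrow> nat" where
  "run f i \<xi> 0 = i"
| "run f i \<xi> (Suc n) = f (run f i \<xi> n) (\<xi> n)"

text \<open>f_M(xi): the set of states visited infinitely often.\<close>
definition inf_states :: "(nat \<Rightarrow> 'a \<Rightarrow> nat) \<Rightarrow> nat \<Rightarrow> (nat \<Rightarrow> 'a) \<Rightarrow> nat set" where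
  "inf_states f i \<xi> = {q. infinite {n. run f i \<xi> n = q}}"

definition CM :: "(nat \<Rightarrow> 'a \<Rightarrow> nat) \<Rightarrow> nat \<Rightarrow> nat set set" where
  "CM f i = range (inf_states f i)"

definition reach :: "(nat \<Rightarrow> 'a \<Rightarrow> nat) \<Rightarrow> nat \<Rightarrow> nat \<Rightarrow> bool" where
  "reach f p q \<longleftrightarrow> (p, q) \<in> {(r, f r x) | r x. True}\<^sup>*"

definition leq0 :: "(nat \<Rightarrow> 'a \<Rightarrow> nat) \<Rightarrow> nat set \<Rightarrow> nat set \<Rightarrow> bool" where
  "leq0 f c d \<longleftrightarrow> (\<exists>q\<in>c. \<exists>p\<in>d. reach f q p)"

definition leq1 :: "nat set \<Rightarrow> nat set \<Rightarrow> bool" where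
  "leq1 c d \<longleftrightarrow> d \<subseteq> c"

definition up_sets :: "'b set \<Rightarrow> ('b \<Rightarrow> 'b \<Rightarrow> bool) \<Rightarrow> 'b set set" where
  "up_sets C le = {U. U \<subseteq> C \<and> (\<forall>c\<in>U. \<forall>d\<in>C. le c d \<longrightarrow> d \<in> U)}"

definition CM0 :: "(nat \<Rightarrow> 'a \<Rightarrow> nat) \<Rightarrow> nat \<Rightarrow> nat set set set" where
  "CM0 f i = up_sets (CM f i) (leq0 f)"

definition CM1 :: "(nat \<Rightarrow> 'a \<Rightarrow> nat) \<Rightarrow> nat \<Rightarrow> nat set set set" where
  "CM1 f i = up_sets (CM f i) leq1"

text \<open>Regular omega-languages: those recognised by a deterministic Muller automaton
  (McNaughton's theorem).\<close>
definition regular_omega :: "(nat \<Rightarrow> 'a) set \<Rightarrow> bool" where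
  "regular_omega L \<longleftrightarrow> (\<exists>Q (f :: nat \<Rightarrow> 'a \<Rightarrow> nat) i \<F>. automaton Q f i \<and>
       L = {\<xi>. inf_states f i \<xi> \<in> \<F>})"

definition open_w :: "(nat \<Rightarrow> 'a) set \<Rightarrow> bool" where
  "open_w A \<longleftrightarrow> (\<forall>\<xi>\<in>A. \<exists>n. \<forall>\<eta>. (\<forall>j<n. \<eta> j = \<xi> j) \<longrightarrow> \<eta> \<in> A)"

definition closed_w :: "(nat \<Rightarrow> 'a) set \<Rightarrow> bool" where
  "closed_w A \<longleftrightarrow> open_w (- A)"

definition sigma02_w :: "(nat \<Rightarrow> 'a) set \<Rightarrow> bool" where
  "sigma02_w A \<longleftrightarrow> (\<exists>C :: nat \<Rightarrow> (nat \<Rightarrow> 'a) set. (\<forall>n. closed_w (C n)) \<and> A = (\<Union>n. C n))"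

definition RSig0 :: "(nat \<Rightarrow> 'a) set set" where
  "RSig0 = {A. regular_omega A \<and> open_w A}"

definition RSig1 :: "(nat \<Rightarrow> 'a) set set" where
  "RSig1 = {A. regular_omega A \<and> sigma02_w A}"

definition forest :: "nat list set \<Rightarrow> bool" where
  "forest F \<longleftrightarrow> finite F \<and> [] \<notin> F \<and> (\<forall>\<tau>\<in>F. \<forall>n. 1 \<le> n \<and> n \<le> length \<tau> \<longrightarrow> take n \<tau> \<in> F)"

definition tree :: "nat list set \<Rightarrow> bool" where
  "tree V \<longleftrightarrow> finite V \<and> (\<forall>\<sigma>\<in>V. \<forall>n \<le> length \<sigma>. take n \<sigma> \<in> V)"

type_synonym ltree = "nat list set \<times> (nat list \<Rightarrow> nat)"

text \<open>(F, c) in F_{T_k}: a forest labeled by k-labeled trees (V, v), v : V -> {0..<k}.\<close>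
definition forest_Tk :: "nat \<Rightarrow> nat list set \<Rightarrow> (nat list \<Rightarrow> ltree) \<Rightarrow> bool" where
  "forest_Tk k F c \<longleftrightarrow> forest F \<and>
     (\<forall>\<tau>\<in>F. tree (fst (c \<tau>)) \<and> (\<forall>\<sigma>\<in>fst (c \<tau>). snd (c \<tau>) \<sigma> < k))"

definition Ut :: "nat list set \<Rightarrow> (nat list \<Rightarrow> 'b set) \<Rightarrow> nat list \<Rightarrow> 'b set" where
  "Ut F U \<tau> = U \<tau> - (\<Union>i\<in>{i. \<tau> @ [i] \<in> F}. U (\<tau> @ [i]))"

definition Uts :: "nat list set \<Rightarrow> (nat list \<Rightarrow> 'b set) \<Rightarrow> (nat list \<Rightarrow> nat list \<Rightarrow> 'b set)
    \<Rightarrow> nat list \<Rightarrow> nat list \<Rightarrow> 'b set" where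
  "Uts F U B \<tau> \<sigma> = Ut F U \<tau> \<inter> B \<tau> \<sigma>"

definition F_family :: "'b set \<Rightarrow> 'b set set \<Rightarrow> 'b set set \<Rightarrow> nat list set \<Rightarrow> (nat list \<Rightarrow> ltree)
    \<Rightarrow> (nat list \<Rightarrow> 'b set) \<Rightarrow> (nat list \<Rightarrow> nat list \<Rightarrow> 'b set) \<Rightarrow> bool" where
  "F_family S L0 L1 F c U B \<longleftrightarrow>
     (\<forall>\<tau>\<in>F. U \<tau> \<in> L0) \<and>
     (\<forall>\<tau>\<in>F. \<forall>i. \<tau> @ [i] \<in> F \<longrightarrow> U (\<tau> @ [i]) \<subseteq> U \<tau>) \<and>
     (\<Union>\<tau>\<in>F. U \<tau>) = S \<and>
     (\<forall>\<tau>\<in>F. \<forall>\<sigma>\<in>fst (c \<tau>). B \<tau> \<sigma> \<in> L1) \<and>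
     (\<forall>\<tau>\<in>F. \<forall>\<sigma>\<in>fst (c \<tau>). \<forall>i. \<sigma> @ [i] \<in> fst (c \<tau>) \<longrightarrow>
         Uts F U B \<tau> (\<sigma> @ [i]) \<subseteq> Uts F U B \<tau> \<sigma>) \<and>
     (\<forall>\<tau>\<in>F. (\<Union>\<sigma>\<in>fst (c \<tau>). Uts F U B \<tau> \<sigma>) = Ut F U \<tau>)"

definition determines :: "nat list set \<Rightarrow> (nat list \<Rightarrow> ltree)
    \<Rightarrow> (nat list \<Rightarrow> 'b set) \<Rightarrow> (nat list \<Rightarrow> nat list \<Rightarrow> 'b set) \<Rightarrow> ('b \<Rightarrow> nat) \<Rightarrow> bool" where
  "determines F c U B A \<longleftrightarrow>
     (\<forall>\<tau>\<in>F. \<forall>\<sigma>\<in>fst (c \<tau>). \<forall>x.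
        x \<in> Uts F U B \<tau> \<sigma> - (\<Union>i\<in>{i. \<sigma> @ [i] \<in> fst (c \<tau>)}. Uts F U B \<tau> (\<sigma> @ [i]))
        \<longrightarrow> A x = snd (c \<tau>) \<sigma>)"

text \<open>L(F): k-partitions A : S -> {0..<k} determined by some F-family over L = (L0, L1).
  A k-partition is represented by a function into nat whose values on S are < k.\<close>
definition Lpart :: "'b set \<Rightarrow> 'b set set \<Rightarrow> 'b set set \<Rightarrow> nat \<Rightarrow> nat list set
    \<Rightarrow> (nat list \<Rightarrow> ltree) \<Rightarrow> ('b \<Rightarrow> nat) set" where
  "Lpart S L0 L1 k F c = {A. (\<forall>x\<in>S. A x < k) \<and>
      (\<exists>U B. F_family S L0 L1 F c U B \<and> determines F c U B A)}"

end

theory Submission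
  imports Defs "HOL-Library.Omega_Words_Fun" "HOL-Library.Nat_Bijection" "HOL-Library.Countable_Set"
begin

text \<open>
  Both sides consist of partitions built from F-families, so the equality amounts to moving
  F-families along the map \<open>\<xi> \<mapsto> f\<^sub>M(\<xi>)\<close> from words to Muller classes. For a Muller
  automaton M and \<open>W \<subseteq> C\<^sub>M\<close>, the preimage of W is open iff W is \<open>\<le>\<^sub>0\<close>-up (splice a
  path to a reachable loop into a word), and it is \<open>\<Sigma>\<^sup>0\<^sub>2\<close> iff W is \<open>\<le>\<^sub>1\<close>-up: if
  \<open>d \<subseteq> c\<close>, \<open>c \<in> W\<close> and \<open>d \<notin> W\<close>, a Baire-category construction alternating ever longer
  stretches of a run with limit d with a loop through all of c gives a word with limit c that
  avoids every closed piece of the preimage. Since preimage along a surjection commutes with the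
  operations of an F-family, automaton partitions pull back to regular ones. Conversely, the
  finitely many regular sets of an F-family over \<open>\<R>\<Sigma>\<close> are all recognised by one product
  automaton M, hence are unions of fibres of \<open>f\<^sub>M\<close>; as every word lies in a leaf cell of the
  family, the partition is constant on fibres and factors through \<open>f\<^sub>M\<close>.
\<close>

section \<open>Runs and their limit sets\<close>

lemma inf_states_eq_limit: "inf_states f q \<xi> = limit (run f q \<xi>)"
  by (simp add: inf_states_def limit_def Inf_many_def)

lemma inf_states_iff: "q \<in> inf_states f i \<xi> \<longleftrightarrow> (\<forall>N. \<exists>n\<ge>N. run f i \<xi> n = q)"
  by (simp add: inf_states_def infinite_nat_iff_unbounded_le)

lemma run_eq_foldl: "run f q \<xi> n = foldl f q (prefix n \<xi>)"
  by (induction n) auto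

lemma suffix_run: "suffix m (run f q \<xi>) = run f (run f q \<xi> m) (suffix m \<xi>)"
proof
  show "suffix m (run f q \<xi>) n = run f (run f q \<xi> m) (suffix m \<xi>) n" for n
    by (induction n) auto
qed

lemma inf_states_suffix: "inf_states f q \<xi> = inf_states f (run f q \<xi> m) (suffix m \<xi>)"
  by (metis inf_states_eq_limit limit_suffix suffix_run)

lemma inf_states_conc: "inf_states f q (w \<frown> \<xi>) = inf_states f (foldl f q w) \<xi>"
  using inf_states_suffix[of f q "w \<frown> \<xi>" "length w"] by (simp add: run_eq_foldl)

lemma run_cong_prefix: "(\<And>j. j < n \<Longrightarrow> \<eta> j = \<xi> j) \<Longrightarrow> run f q \<eta> n = run f q \<xi> n"
  by (induction n) auto

lemma run_in_states: "automaton Q f i \<Longrightarrow> run f i \<xi> n \<in> Q"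
  by (induction n) (auto simp: automaton_def)

lemma finite_range_run: "automaton Q f i \<Longrightarrow> finite (range (run f i \<xi>))"
  by (meson automaton_def finite_subset image_subsetI run_in_states)

lemma inf_states_subset: "automaton Q f i \<Longrightarrow> inf_states f i \<xi> \<subseteq> Q"
  using limit_in_range[of "run f i \<xi>"] run_in_states by (fastforce simp: inf_states_eq_limit)

lemma inf_states_nonempty: "automaton Q f i \<Longrightarrow> inf_states f i \<xi> \<noteq> {}"
  using limit_nonempty[OF finite_range_run] by (fastforce simp: inf_states_eq_limit)

lemma inf_states_eventually:
  assumes "automaton Q f i"
  obtains N where "\<And>m. N \<le> m \<Longrightarrow> run f i \<xi> m \<in> inf_states f i \<xi>"
proof -
  obtain N where "inf_states f i \<xi> = range (suffix N (run f i \<xi>))"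
    using limit_is_suffix[OF finite_range_run[OF assms]] unfolding inf_states_eq_limit by blast
  then show thesis
    by (intro that[of N]) (metis le_add_diff_inverse rangeI suffix_nth)
qed

lemma reach_run: "reach f (run f q \<xi> n) (run f q \<xi> (n + j))"
proof (induction j)
  case (Suc j)
  have "(run f q \<xi> (n + j), run f q \<xi> (n + Suc j)) \<in> {(r, f r x) | r x. True}"
    by auto
  with Suc show ?case
    unfolding reach_def by (meson rtrancl.rtrancl_into_rtrancl)
qed (simp add: reach_def)

lemma reach_imp_foldl: "reach f q p \<Longrightarrow> \<exists>w. foldl f q w = p"
  unfolding reach_def
proof (induction rule: rtrancl_induct)
  case base
  show ?case
    by (rule exI[of _ "[]"]) simp
next
  case (step y z)
  then obtain w x where "foldl f q w = y" "z = f y x"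
    by blast
  then show ?case
    by (intro exI[of _ "w @ [x]"]) simp
qed

definition visited :: "(nat \<Rightarrow> 'a \<Rightarrow> nat) \<Rightarrow> nat \<Rightarrow> 'a list \<Rightarrow> nat set" where
  "visited f q w = (\<lambda>j. foldl f q (take j w)) ` {..length w}"

lemma visited_append: "visited f q (u @ v) = visited f q u \<union> visited f (foldl f q u) v"
proof (intro equalityI subsetI)
  fix p assume "p \<in> visited f q (u @ v)"
  then obtain j where j: "j \<le> length u + length v" "p = foldl f q (take j (u @ v))"
    by (auto simp: visited_def)
  show "p \<in> visited f q u \<union> visited f (foldl f q u) v"
  proof (cases "j \<le> length u")
    case True
    then show ?thesis
      using j by (auto simp: visited_def)
  next
    case False
    then have "p \<in> visited f (foldl f q u) v"
      using j unfolding visited_def by (intro image_eqI[of _ _ "j - length u"]) auto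
    then show ?thesis ..
  qed
next
  fix p assume "p \<in> visited f q u \<union> visited f (foldl f q u) v"
  then show "p \<in> visited f q (u @ v)"
  proof
    assume "p \<in> visited f q u"
    then obtain j where "j \<le> length u" "p = foldl f q (take j (u @ v))"
      by (auto simp: visited_def)
    then show ?thesis
      unfolding visited_def by (intro image_eqI[of _ _ j]) auto
  next
    assume "p \<in> visited f (foldl f q u) v"
    then obtain j where "j \<le> length v" "p = foldl f q (take (length u + j) (u @ v))"
      by (auto simp: visited_def)
    then show ?thesis
      by (auto simp: visited_def image_iff intro: bexI[of _ "length u + j"])
  qed
qed

lemma foldl_subsequence: "m \<le> n \<Longrightarrow> foldl f (run f q \<xi> m) (\<xi> [m \<rightarrow> n]) = run f q \<xi> n"
  using subsequence_append[of \<xi> m "n - m"] by (simp add: run_eq_foldl)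

lemma visited_subsequence:
  assumes "m \<le> n"
  shows "visited f (run f q \<xi> m) (\<xi> [m \<rightarrow> n]) = run f q \<xi> ` {m..n}"
proof -
  have "foldl f (run f q \<xi> m) (take j (\<xi> [m \<rightarrow> n])) = run f q \<xi> (m + j)" if "j \<le> n - m" for j
    using that subsequence_append[of \<xi> m j] by (simp add: run_eq_foldl min_def)
  then have "visited f (run f q \<xi> m) (\<xi> [m \<rightarrow> n]) = (\<lambda>j. run f q \<xi> (m + j)) ` {..n - m}"
    unfolding visited_def by (intro image_cong) auto
  also have "\<dots> = run f q \<xi> ` ((+) m ` {0..n - m})"
    by (simp only: atMost_atLeast0 image_image)
  also have "\<dots> = run f q \<xi> ` {m..n}"
    using assms by simp
  finally show ?thesis .
qed

lemma run_image_interval: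
  assumes "prefix (length (w @ v)) \<zeta> = w @ v"
  shows "run f q \<zeta> ` {length w..length w + length v} = visited f (foldl f q w) v"
proof -
  have "take (length w + length v) (prefix (length w) \<zeta> @ \<zeta> [length w \<rightarrow> length w + length v]) = w @ v"
    using assms by (simp add: subsequence_append[symmetric])
  then have "w = prefix (length w) \<zeta>" "v = \<zeta> [length w \<rightarrow> length w + length v]"
    by simp_all
  then show ?thesis
    by (metis le_add1 visited_subsequence run_eq_foldl)
qed

section \<open>A common automaton for finitely many regular languages\<close>

lemma limit_comp_finite_range:
  assumes "finite (range w)"
  shows "limit (h \<circ> w) = h ` limit w"
proof
  show "h ` limit w \<subseteq> limit (h \<circ> w)"
    by auto
  show "limit (h \<circ> w) \<subseteq> h ` limit w"
  proof
    fix x assume "x \<in> limit (h \<circ> w)"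
    moreover have "{n. h (w n) = x} = (\<Union>a\<in>range w \<inter> h -` {x}. {n. w n = a})"
      by auto
    ultimately have "infinite (\<Union>a\<in>range w \<inter> h -` {x}. {n. w n = a})"
      by (simp add: limit_def Inf_many_def)
    then obtain a where "a \<in> range w" "h a = x" "infinite {n. w n = a}"
      using assms by blast
    then show "x \<in> h ` limit w"
      by (auto simp: limit_def Inf_many_def)
  qed
qed

definition prod_trans :: "(nat \<Rightarrow> 'a \<Rightarrow> nat) \<Rightarrow> (nat \<Rightarrow> 'a \<Rightarrow> nat) \<Rightarrow> nat \<Rightarrow> 'a \<Rightarrow> nat" where
  "prod_trans f1 f2 q x = prod_encode (f1 (fst (prod_decode q)) x, f2 (snd (prod_decode q)) x)"

lemma run_prod_trans:
  "run (prod_trans f1 f2) (prod_encode (i1, i2)) \<xi> n = prod_encode (run f1 i1 \<xi> n, run f2 i2 \<xi> n)"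
  by (induction n) (auto simp: prod_trans_def)

lemma automaton_prod_trans:
  "automaton Q1 f1 i1 \<Longrightarrow> automaton Q2 f2 i2 \<Longrightarrow>
    automaton (prod_encode ` (Q1 \<times> Q2)) (prod_trans f1 f2) (prod_encode (i1, i2))"
  by (auto simp: automaton_def prod_trans_def)

lemma inf_states_prod_trans:
  assumes "automaton Q1 f1 i1" "automaton Q2 f2 i2"
  defines "g \<equiv> inf_states (prod_trans f1 f2) (prod_encode (i1, i2))"
  shows "inf_states f1 i1 \<xi> = (fst \<circ> prod_decode) ` g \<xi>"
    and "inf_states f2 i2 \<xi> = (snd \<circ> prod_decode) ` g \<xi>"
proof -
  have fin: "finite (range (run (prod_trans f1 f2) (prod_encode (i1, i2)) \<xi>))"
    using finite_range_run[OF automaton_prod_trans[OF assms(1,2)]] .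
  have "run f1 i1 \<xi> = (fst \<circ> prod_decode) \<circ> run (prod_trans f1 f2) (prod_encode (i1, i2)) \<xi>"
    "run f2 i2 \<xi> = (snd \<circ> prod_decode) \<circ> run (prod_trans f1 f2) (prod_encode (i1, i2)) \<xi>"
    by (auto simp: run_prod_trans)
  then show "inf_states f1 i1 \<xi> = (fst \<circ> prod_decode) ` g \<xi>"
    and "inf_states f2 i2 \<xi> = (snd \<circ> prod_decode) ` g \<xi>"
    by (simp_all add: g_def inf_states_eq_limit limit_comp_finite_range[OF fin])
qed

lemma regular_omega_common_automaton:
  fixes LL :: "(nat \<Rightarrow> 'a) set set"
  assumes "finite LL" "\<forall>L\<in>LL. regular_omega L"
  shows "\<exists>Q (f :: nat \<Rightarrow> 'a \<Rightarrow> nat) i. automaton Q f i \<and> (\<forall>L\<in>LL. \<exists>W. L = inf_states f i -` W)"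
  using assms
proof (induction LL rule: finite_induct)
  case empty
  have "automaton {0} (\<lambda>_ _. 0) 0"
    by (simp add: automaton_def)
  then show ?case
    by blast
next
  case (insert L LL)
  then obtain Q1 and f1 :: "nat \<Rightarrow> 'a \<Rightarrow> nat" and i1 where a1: "automaton Q1 f1 i1"
    and LL: "\<forall>L\<in>LL. \<exists>W. L = inf_states f1 i1 -` W"
    by auto
  from insert.prems obtain Q2 and f2 :: "nat \<Rightarrow> 'a \<Rightarrow> nat" and i2 \<FF> where a2: "automaton Q2 f2 i2"
    and L: "L = inf_states f2 i2 -` \<FF>"
    unfolding regular_omega_def vimage_def by auto
  let ?g = "inf_states (prod_trans f1 f2) (prod_encode (i1, i2))"
  have "inf_states f1 i1 = (image (fst \<circ> prod_decode)) \<circ> ?g"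
    "inf_states f2 i2 = (image (snd \<circ> prod_decode)) \<circ> ?g"
    using inf_states_prod_trans[OF a1 a2] by auto
  then have "\<forall>L'\<in>insert L LL. \<exists>W. L' = ?g -` W"
    using L LL by (metis insert_iff vimage_comp)
  then show ?case
    using automaton_prod_trans[OF a1 a2] by blast
qed

section \<open>Open and \<open>\<Sigma>\<^sup>0\<^sub>2\<close> preimages of sets of Muller classes\<close>

lemma regular_omega_vimage_inf_states: "automaton Q f i \<Longrightarrow> regular_omega (inf_states f i -` W)"
  unfolding regular_omega_def vimage_def by blast

lemma open_w_vimage_inf_states:
  assumes a: "automaton Q f i" and W: "W \<in> CM0 f i"
  shows "open_w (inf_states f i -` W)"
  unfolding open_w_def
proof
  fix \<xi> assume \<xi>: "\<xi> \<in> inf_states f i -` W"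
  obtain N where N: "\<And>m. N \<le> m \<Longrightarrow> run f i \<xi> m \<in> inf_states f i \<xi>"
    using inf_states_eventually[OF a] by blast
  have "\<eta> \<in> inf_states f i -` W" if agree: "\<forall>j<N. \<eta> j = \<xi> j" for \<eta>
  proof -
    obtain p where p: "p \<in> inf_states f i \<eta>"
      using inf_states_nonempty[OF a] by blast
    then obtain m where m: "N \<le> m" "run f i \<eta> m = p"
      by (auto simp: inf_states_iff)
    have "reach f (run f i \<eta> N) p"
      using reach_run[of f i \<eta> N "m - N"] m by simp
    then have "leq0 f (inf_states f i \<xi>) (inf_states f i \<eta>)"
      unfolding leq0_def using N[of N] p run_cong_prefix[of N \<eta> \<xi>] agree by auto
    then show ?thesis
      using W \<xi> by (auto simp: CM0_def up_sets_def CM_def)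
  qed
  then show "\<exists>n. \<forall>\<eta>. (\<forall>j<n. \<eta> j = \<xi> j) \<longrightarrow> \<eta> \<in> inf_states f i -` W"
    by blast
qed

lemma CM0_if_open_w_vimage:
  assumes W: "W \<subseteq> CM f i" and op: "open_w (inf_states f i -` W)"
  shows "W \<in> CM0 f i"
  unfolding CM0_def up_sets_def
proof (intro CollectI conjI ballI impI W)
  let ?g = "inf_states f i"
  fix c d assume "c \<in> W" "d \<in> CM f i" "leq0 f c d"
  then obtain \<xi> \<eta> q p where \<xi>: "?g \<xi> = c" "?g \<xi> \<in> W" and \<eta>: "?g \<eta> = d"
    and qp: "q \<in> c" "p \<in> d" "reach f q p"
    using W by (auto simp: CM_def leq0_def)
  obtain n where n: "\<And>\<zeta>. (\<forall>j<n. \<zeta> j = \<xi> j) \<Longrightarrow> ?g \<zeta> \<in> W"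
    using op \<xi>(2) by (force simp: open_w_def)
  obtain N where N: "n \<le> N" "run f i \<xi> N = q"
    using qp(1) \<xi>(1) by (force simp: inf_states_iff)
  obtain m where m: "run f i \<eta> m = p"
    using qp(2) \<eta> by (force simp: inf_states_iff)
  obtain w where w: "foldl f q w = p"
    using reach_imp_foldl[OF qp(3)] by blast
  have "?g ((prefix N \<xi> @ w) \<frown> suffix m \<eta>) = d"
    using inf_states_suffix[of f i \<eta> m] by (simp add: inf_states_conc run_eq_foldl[symmetric] N w m \<eta>)
  moreover have "?g ((prefix N \<xi> @ w) \<frown> suffix m \<eta>) \<in> W"
    using N(1) by (intro n) (simp add: conc_def nth_append)
  ultimately show "d \<in> W"
    by simp
qed

lemma vimage_inf_states_RSig0_iff:
  "automaton Q f i \<Longrightarrow> W \<subseteq> CM f i \<Longrightarrow> inf_states f i -` W \<in> RSig0 \<longleftrightarrow> W \<in> CM0 f i"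
  by (auto simp: RSig0_def regular_omega_vimage_inf_states
      intro: open_w_vimage_inf_states CM0_if_open_w_vimage)

lemma closed_w_run_eventually_in: "closed_w {\<xi>. \<forall>m\<ge>N. run f i \<xi> m \<in> c}"
  unfolding closed_w_def open_w_def
proof
  fix \<xi> assume "\<xi> \<in> - {\<xi>. \<forall>m\<ge>N. run f i \<xi> m \<in> c}"
  then obtain m where "N \<le> m" "run f i \<xi> m \<notin> c"
    by auto
  then have "\<eta> \<in> - {\<xi>. \<forall>m\<ge>N. run f i \<xi> m \<in> c}" if "\<forall>j<m. \<eta> j = \<xi> j" for \<eta>
    using run_cong_prefix[of m \<eta> \<xi>] that by auto
  then show "\<exists>n. \<forall>\<eta>. (\<forall>j<n. \<eta> j = \<xi> j) \<longrightarrow> \<eta> \<in> - {\<xi>. \<forall>m\<ge>N. run f i \<xi> m \<in> c}"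
    by blast
qed

lemma sigma02_w_countable_UN:
  assumes "countable I" "\<And>x. x \<in> I \<Longrightarrow> closed_w (C x)"
  shows "sigma02_w (\<Union>x\<in>I. C x)"
proof (cases "I = {}")
  case True
  have "closed_w {}"
    by (simp add: closed_w_def open_w_def)
  then show ?thesis
    using True unfolding sigma02_w_def by (intro exI[of _ "\<lambda>_. {}"]) simp
next
  case False
  then have "(\<Union>x\<in>I. C x) = (\<Union>n. C (from_nat_into I n))"
    using assms(1) by (metis range_from_nat_into image_image)
  then show ?thesis
    unfolding sigma02_w_def using assms False by (metis from_nat_into)
qed

lemma sigma02_w_vimage_inf_states:
  assumes a: "automaton Q f i" and W: "W \<in> CM1 f i"
  shows "sigma02_w (inf_states f i -` W)"
proof -
  have "W \<subseteq> Pow Q"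
    using W inf_states_subset[OF a] by (fastforce simp: CM1_def up_sets_def CM_def)
  then have "countable (W \<times> (UNIV :: nat set))"
    using a by (simp add: automaton_def countable_finite finite_subset)
  moreover have "inf_states f i -` W = (\<Union>(c, N)\<in>W \<times> UNIV. {\<xi>. \<forall>m\<ge>N. run f i \<xi> m \<in> c})"
  proof (intro set_eqI iffI)
    fix \<xi> assume "\<xi> \<in> inf_states f i -` W"
    moreover obtain N where "\<And>m. N \<le> m \<Longrightarrow> run f i \<xi> m \<in> inf_states f i \<xi>"
      using inf_states_eventually[OF a] by blast
    ultimately show "\<xi> \<in> (\<Union>(c, N)\<in>W \<times> UNIV. {\<xi>. \<forall>m\<ge>N. run f i \<xi> m \<in> c})"
      by blast
  next
    fix \<xi> assume "\<xi> \<in> (\<Union>(c, N)\<in>W \<times> UNIV. {\<xi>. \<forall>m\<ge>N. run f i \<xi> m \<in> c})"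
    then obtain c N where "c \<in> W" "\<forall>m\<ge>N. run f i \<xi> m \<in> c"
      by blast
    moreover have "inf_states f i \<xi> \<subseteq> c"
      using calculation(2) by (force simp: inf_states_iff)
    ultimately show "\<xi> \<in> inf_states f i -` W"
      using W by (auto simp: CM1_def up_sets_def leq1_def CM_def)
  qed
  ultimately show ?thesis
    by (auto intro: sigma02_w_countable_UN closed_w_run_eventually_in)
qed

lemma prefix_chain_limit:
  fixes w :: "nat \<Rightarrow> 'a list"
  assumes step: "\<And>n. \<exists>v. w (Suc n) = w n @ v"
    and grows: "\<And>n. length (w n) < length (w (Suc n))"
  obtains \<zeta> where "\<And>n. prefix (length (w n)) \<zeta> = w n"
proof -
  have chain: "\<exists>v. w m = w n @ v" if "n \<le> m" for n m
    using that
  proof (induction m rule: dec_induct)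
    case (step m)
    then show ?case
      using assms(1)[of m] by auto
  qed simp
  have len: "n \<le> length (w n)" for n
    by (induction n) (use grows Suc_le_eq le_less_trans in blast)+
  define \<zeta> where "\<zeta> j = w (Suc j) ! j" for j
  have "\<zeta> j = w n ! j" if "j < length (w n)" for n j
  proof -
    obtain v v' where "w (max n (Suc j)) = w n @ v" "w (max n (Suc j)) = w (Suc j) @ v'"
      using chain by (meson max.cobounded1 max.cobounded2)
    moreover have "j < length (w (Suc j))"
      using len[of "Suc j"] by simp
    ultimately show ?thesis
      using that by (metis \<zeta>_def nth_append)
  qed
  then have "prefix (length (w n)) \<zeta> = w n" for n
    by (intro nth_equalityI) (auto simp: subsequence_def)
  then show thesis
    by (rule that)
qed

lemma nth_prefix_eq: "prefix (length w) \<zeta> = w \<Longrightarrow> j < length w \<Longrightarrow> \<zeta> j = w ! j"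
  by (metis add_0 subsequence_nth diff_zero)

lemma inf_states_prefix_chain:
  assumes prefix: "\<And>n. prefix (length (w n)) \<zeta> = w n"
    and step: "\<And>n. w (Suc n) = w n @ s n"
    and at_p: "\<And>n. foldl f i (w n) = p"
    and visits: "\<And>n. visited f p (s n) = c"
    and len: "\<And>n. n \<le> length (w n)"
  shows "inf_states f i \<zeta> = c"
proof -
  have seg: "run f i \<zeta> ` {length (w n)..length (w (Suc n))} = c" for n
    using run_image_interval[OF prefix[of "Suc n", unfolded step], of f i] by (simp add: step at_p visits)
  have tail: "run f i \<zeta> ` {length (w 0)..length (w n)} \<subseteq> c" for n
  proof (induction n)
    case 0
    then show ?case
      using seg[of 0] by (auto simp: step)
  next
    case (Suc n)
    have "{length (w 0)..length (w (Suc n))}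
        \<subseteq> {length (w 0)..length (w n)} \<union> {length (w n)..length (w (Suc n))}"
      by auto
    then have "run f i \<zeta> ` {length (w 0)..length (w (Suc n))}
        \<subseteq> run f i \<zeta> ` {length (w 0)..length (w n)} \<union> run f i \<zeta> ` {length (w n)..length (w (Suc n))}"
      by (simp add: image_Un[symmetric] image_mono)
    then show ?case
      using Suc seg[of n] by blast
  qed
  have "range (suffix (length (w 0)) (run f i \<zeta>)) \<subseteq> c"
    using tail len by fastforce
  then have "inf_states f i \<zeta> \<subseteq> c"
    using limit_in_range_suffix by (fastforce simp: inf_states_eq_limit)
  moreover have "c \<subseteq> inf_states f i \<zeta>"
  proof
    fix q assume "q \<in> c"
    have "\<exists>n\<ge>N. run f i \<zeta> n = q" for N
      using seg[of N] len[of N] \<open>q \<in> c\<close> by (metis atLeastAtMost_iff imageE le_trans)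
    then show "q \<in> inf_states f i \<zeta>"
      by (simp add: inf_states_iff)
  qed
  ultimately show ?thesis
    by blast
qed

lemma open_w_return_moduli:
  fixes V :: "nat \<Rightarrow> (nat \<Rightarrow> 'a) set"
  assumes V: "\<And>n. open_w (V n)" "\<And>n w. foldl f i w = p \<Longrightarrow> w \<frown> \<beta> \<in> V n"
    and \<beta>: "p \<in> inf_states f p \<beta>"
  shows "\<exists>T. \<forall>n w. foldl f i w = p \<longrightarrow>
    0 < T n w \<and> run f p \<beta> (T n w) = p \<and> (\<forall>\<eta>. (\<forall>j<T n w. \<eta> j = (w \<frown> \<beta>) j) \<longrightarrow> \<eta> \<in> V n)"
proof -
  have "\<exists>T. foldl f i w = p \<longrightarrow>
      0 < T \<and> run f p \<beta> T = p \<and> (\<forall>\<eta>. (\<forall>j<T. \<eta> j = (w \<frown> \<beta>) j) \<longrightarrow> \<eta> \<in> V n)" for n w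
  proof (cases "foldl f i w = p")
    case True
    obtain K where K: "\<forall>\<eta>. (\<forall>j<K. \<eta> j = (w \<frown> \<beta>) j) \<longrightarrow> \<eta> \<in> V n"
      using V True unfolding open_w_def by blast
    obtain T where "Suc K \<le> T" "run f p \<beta> T = p"
      using \<beta> unfolding inf_states_iff by blast
    then show ?thesis
      using K by (intro exI[of _ T]) auto
  qed simp
  then have "\<forall>n. \<exists>Tn. \<forall>w. foldl f i w = p \<longrightarrow>
      0 < Tn w \<and> run f p \<beta> (Tn w) = p \<and> (\<forall>\<eta>. (\<forall>j<Tn w. \<eta> j = (w \<frown> \<beta>) j) \<longrightarrow> \<eta> \<in> V n)"
    by (auto intro: choice)
  then show ?thesis
    by (rule choice)
qed

lemma exists_word_in_open_sets_with_inf_states: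
  fixes V :: "nat \<Rightarrow> (nat \<Rightarrow> 'a) set"
  assumes u: "foldl f i u = p"
    and \<beta>: "\<And>j. run f p \<beta> j \<in> c" "p \<in> inf_states f p \<beta>"
    and \<gamma>: "foldl f p \<gamma> = p" "visited f p \<gamma> = c"
    and V: "\<And>n. open_w (V n)" "\<And>n w. foldl f i w = p \<Longrightarrow> w \<frown> \<beta> \<in> V n"
  obtains \<zeta> where "inf_states f i \<zeta> = c" "\<And>n. \<zeta> \<in> V n"
proof -
  obtain T where T_all: "\<forall>n w. foldl f i w = p \<longrightarrow>
      0 < T n w \<and> run f p \<beta> (T n w) = p \<and> (\<forall>\<eta>. (\<forall>j<T n w. \<eta> j = (w \<frown> \<beta>) j) \<longrightarrow> \<eta> \<in> V n)"
    using open_w_return_moduli[where V = V, OF V \<beta>(2)] by blast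
  note T = T_all[rule_format]
  text \<open>Stage \<open>n + 1\<close> appends to \<open>pref n\<close> a piece of \<open>\<beta>\<close> long enough to force membership in
    \<open>V n\<close> and ending in \<open>p\<close>, then the loop \<open>\<gamma>\<close> through all of \<open>c\<close>.\<close>
  define pref where "pref = rec_nat u (\<lambda>n w. w @ prefix (T n w) \<beta> @ \<gamma>)"
  define s where "s n = prefix (T n (pref n)) \<beta> @ \<gamma>" for n
  have step: "pref (Suc n) = pref n @ s n" for n
    by (simp add: pref_def s_def)
  have at_p: "foldl f i (pref n) = p" for n
  proof (induction n)
    case (Suc n)
    then show ?case
      using T[OF Suc] \<gamma>(1) by (simp add: step s_def run_eq_foldl[symmetric])
  qed (simp add: pref_def u)
  have len: "length (pref n) < length (pref (Suc n))" for n
    using T[OF at_p[of n]] by (simp add: step s_def)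
  obtain \<zeta> where prefix: "\<And>n. prefix (length (pref n)) \<zeta> = pref n"
    using prefix_chain_limit[of pref] step len by blast
  have "visited f p (prefix (T n (pref n)) \<beta>) \<subseteq> c" for n
    using visited_subsequence[of 0 "T n (pref n)" f p \<beta>] \<beta>(1) by auto
  then have "visited f p (s n) = c" for n
    using T[OF at_p[of n]] \<gamma>(2) by (auto simp: s_def visited_append run_eq_foldl[symmetric])
  moreover have "n \<le> length (pref n)" for n
    by (induction n) (use len Suc_le_eq le_less_trans in blast)+
  ultimately have "inf_states f i \<zeta> = c"
    by (intro inf_states_prefix_chain[where w = pref and s = s and p = p]) (auto simp: prefix step at_p)
  moreover have "\<zeta> \<in> V n" for n
  proof -
    have "\<zeta> j = (pref n \<frown> \<beta>) j" if "j < T n (pref n)" for j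
      using that nth_prefix_eq[OF prefix[of "Suc n"], of j]
      by (auto simp: step s_def conc_def nth_append)
    then show ?thesis
      using T[OF at_p[of n]] by blast
  qed
  ultimately show thesis
    using that by blast
qed

lemma inf_states_imp_foldl: "p \<in> inf_states f i \<xi> \<Longrightarrow> \<exists>u. foldl f i u = p"
  unfolding inf_states_iff by (metis run_eq_foldl)

lemma inf_states_cycle:
  assumes a: "automaton Q f i" and p: "p \<in> inf_states f i \<xi>"
  obtains \<gamma> where "foldl f p \<gamma> = p" "visited f p \<gamma> = inf_states f i \<xi>"
proof -
  let ?c = "inf_states f i \<xi>"
  obtain N where N: "\<And>m. N \<le> m \<Longrightarrow> run f i \<xi> m \<in> ?c"
    using inf_states_eventually[OF a] by blast
  obtain m1 where m1: "N \<le> m1" "run f i \<xi> m1 = p"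
    using p by (force simp: inf_states_iff)
  have "\<forall>q\<in>?c. \<exists>t. m1 \<le> t \<and> run f i \<xi> t = q"
    by (auto simp: inf_states_iff)
  then obtain t where t: "\<forall>q\<in>?c. m1 \<le> t q \<and> run f i \<xi> (t q) = q"
    by (auto dest!: bchoice)
  have "finite ?c"
    using inf_states_subset[OF a] a by (meson automaton_def finite_subset)
  then have t_le: "t q \<le> Max (t ` ?c)" if "q \<in> ?c" for q
    using that by simp
  obtain m2 where m2: "max m1 (Max (t ` ?c)) \<le> m2" "run f i \<xi> m2 = p"
    using p unfolding inf_states_iff by blast
  have "run f i \<xi> ` {m1..m2} = ?c"
  proof
    show "run f i \<xi> ` {m1..m2} \<subseteq> ?c"
      using N m1(1) by auto
    show "?c \<subseteq> run f i \<xi> ` {m1..m2}"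
    proof
      fix q assume "q \<in> ?c"
      then show "q \<in> run f i \<xi> ` {m1..m2}"
        using t t_le[of q] m2(1) by (intro image_eqI[of _ _ "t q"]) auto
    qed
  qed
  then show thesis
    using m1 m2 by (intro that[of "\<xi> [m1 \<rightarrow> m2]"]) (auto simp: foldl_subsequence visited_subsequence)
qed

lemma inf_states_tail_loop:
  assumes a: "automaton Q f i" and p: "p \<in> inf_states f i \<eta>"
  obtains m where "\<forall>j. run f p (suffix m \<eta>) j \<in> inf_states f i \<eta>"
    "inf_states f p (suffix m \<eta>) = inf_states f i \<eta>"
proof -
  obtain N where N: "\<And>m. N \<le> m \<Longrightarrow> run f i \<eta> m \<in> inf_states f i \<eta>"
    using inf_states_eventually[OF a] by blast
  obtain m where m: "N \<le> m" "run f i \<eta> m = p"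
    using p unfolding inf_states_iff by blast
  have "run f p (suffix m \<eta>) j = run f i \<eta> (m + j)" for j
    using fun_cong[OF suffix_run[of m f i \<eta>], of j] m(2) by simp
  then have "\<forall>j. run f p (suffix m \<eta>) j \<in> inf_states f i \<eta>"
    using N m(1) by simp
  moreover have "inf_states f p (suffix m \<eta>) = inf_states f i \<eta>"
    using inf_states_suffix[of f i \<eta> m] m(2) by simp
  ultimately show thesis
    by (rule that)
qed

lemma CM1_if_sigma02_w_vimage:
  fixes f :: "nat \<Rightarrow> 'a \<Rightarrow> nat"
  assumes a: "automaton Q f i" and W: "W \<subseteq> CM f i" and sigma: "sigma02_w (inf_states f i -` W)"
  shows "W \<in> CM1 f i"
  unfolding CM1_def up_sets_def
proof (intro CollectI conjI ballI impI W)
  let ?g = "inf_states f i"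
  fix c d assume "c \<in> W" "d \<in> CM f i" "leq1 c d"
  then have "d \<subseteq> c"
    by (simp add: leq1_def)
  obtain \<xi> \<eta> where \<xi>: "?g \<xi> = c" "c \<in> W" and \<eta>: "?g \<eta> = d"
    using W \<open>c \<in> W\<close> \<open>d \<in> CM f i\<close> unfolding CM_def by blast
  show "d \<in> W"
  proof (rule ccontr)
    assume "d \<notin> W"
    obtain C :: "nat \<Rightarrow> (nat \<Rightarrow> 'a) set" where C: "\<And>n. closed_w (C n)" "?g -` W = (\<Union>n. C n)"
      using sigma unfolding sigma02_w_def by blast
    obtain p where "p \<in> d"
      using inf_states_nonempty[OF a] \<eta> by blast
    then obtain m where "\<forall>j. run f p (suffix m \<eta>) j \<in> d" and \<beta>_inf: "inf_states f p (suffix m \<eta>) = d"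
      using inf_states_tail_loop[OF a, of p \<eta>] unfolding \<eta> by blast
    then have \<beta>_in_c: "run f p (suffix m \<eta>) j \<in> c" for j
      using \<open>d \<subseteq> c\<close> by blast
    obtain \<gamma> where \<gamma>: "foldl f p \<gamma> = p" "visited f p \<gamma> = c"
      using inf_states_cycle[OF a] \<xi> \<open>p \<in> d\<close> \<open>d \<subseteq> c\<close> by blast
    obtain u where u: "foldl f i u = p"
      using inf_states_imp_foldl[of p f i \<xi>] \<xi>(1) \<open>p \<in> d\<close> \<open>d \<subseteq> c\<close> by blast
    text \<open>Words with limit \<open>d \<notin> W\<close> lie in every open set \<open>- C n\<close>; gluing them to loops
      through \<open>c\<close> yields a word with limit \<open>c \<in> W\<close> that still lies in all of them.\<close>
    have "w \<frown> suffix m \<eta> \<in> - C n" if "foldl f i w = p" for n w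
    proof -
      have "?g (w \<frown> suffix m \<eta>) \<notin> W"
        using that \<beta>_inf \<open>d \<notin> W\<close> by (simp add: inf_states_conc)
      then show ?thesis
        using C(2) by blast
    qed
    moreover have "open_w (- C n)" for n
      using C(1) by (simp add: closed_w_def)
    ultimately obtain \<zeta> where "?g \<zeta> = c" "\<And>n. \<zeta> \<in> - C n"
      using exists_word_in_open_sets_with_inf_states[OF u \<beta>_in_c _ \<gamma>, of "\<lambda>n. - C n"] \<beta>_inf \<open>p \<in> d\<close>
      by blast
    then show False
      using \<xi>(2) C(2) by blast
  qed
qed

lemma vimage_inf_states_RSig1_iff:
  "automaton Q f i \<Longrightarrow> W \<subseteq> CM f i \<Longrightarrow> inf_states f i -` W \<in> RSig1 \<longleftrightarrow> W \<in> CM1 f i"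
  by (auto simp: RSig1_def regular_omega_vimage_inf_states
      intro: sigma02_w_vimage_inf_states CM1_if_sigma02_w_vimage)

section \<open>Transporting F-families along a surjection\<close>

lemma vimage_subset_vimage_iff: "X \<subseteq> range g \<Longrightarrow> g -` X \<subseteq> g -` Y \<longleftrightarrow> X \<subseteq> Y"
  by blast

lemma vimage_eq_vimage_iff: "X \<subseteq> range g \<Longrightarrow> Y \<subseteq> range g \<Longrightarrow> g -` X = g -` Y \<longleftrightarrow> X = Y"
  by blast

context
  fixes g :: "'b \<Rightarrow> 'c" and T :: "'c set" and F :: "nat list set" and c :: "nat list \<Rightarrow> ltree"
    and U :: "nat list \<Rightarrow> 'b set" and B :: "nat list \<Rightarrow> nat list \<Rightarrow> 'b set"
    and U' :: "nat list \<Rightarrow> 'c set" and B' :: "nat list \<Rightarrow> nat list \<Rightarrow> 'c set"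
  assumes range_g: "range g = T"
    and U_vimage: "\<And>\<tau>. \<tau> \<in> F \<Longrightarrow> U \<tau> = g -` U' \<tau> \<and> U' \<tau> \<subseteq> T"
    and B_vimage: "\<And>\<tau> \<sigma>. \<tau> \<in> F \<Longrightarrow> \<sigma> \<in> fst (c \<tau>) \<Longrightarrow> B \<tau> \<sigma> = g -` B' \<tau> \<sigma> \<and> B' \<tau> \<sigma> \<subseteq> T"
begin

lemma Ut_vimage: "\<tau> \<in> F \<Longrightarrow> Ut F U \<tau> = g -` Ut F U' \<tau>"
  using U_vimage by (auto simp: Ut_def)

lemma Uts_vimage: "\<tau> \<in> F \<Longrightarrow> \<sigma> \<in> fst (c \<tau>) \<Longrightarrow> Uts F U B \<tau> \<sigma> = g -` Uts F U' B' \<tau> \<sigma>"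
  using Ut_vimage B_vimage by (auto simp: Uts_def)

lemma Uts_subset: "\<tau> \<in> F \<Longrightarrow> Uts F U' B' \<tau> \<sigma> \<subseteq> T"
  using U_vimage by (auto simp: Uts_def Ut_def)

lemma UN_Uts_eq_Ut_vimage_iff:
  assumes "\<tau> \<in> F"
  shows "(\<Union>\<sigma>\<in>fst (c \<tau>). Uts F U B \<tau> \<sigma>) = Ut F U \<tau>
    \<longleftrightarrow> (\<Union>\<sigma>\<in>fst (c \<tau>). Uts F U' B' \<tau> \<sigma>) = Ut F U' \<tau>"
proof -
  have "(\<Union>\<sigma>\<in>fst (c \<tau>). Uts F U B \<tau> \<sigma>) = g -` (\<Union>\<sigma>\<in>fst (c \<tau>). Uts F U' B' \<tau> \<sigma>)"
    using Uts_vimage[OF assms] by auto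
  moreover have "(\<Union>\<sigma>\<in>fst (c \<tau>). Uts F U' B' \<tau> \<sigma>) \<subseteq> range g" "Ut F U' \<tau> \<subseteq> range g"
    using Uts_subset[OF assms] U_vimage[OF assms] range_g by (auto simp: Ut_def)
  ultimately show ?thesis
    using Ut_vimage[OF assms] vimage_eq_vimage_iff[of "\<Union>\<sigma>\<in>fst (c \<tau>). Uts F U' B' \<tau> \<sigma>" g "Ut F U' \<tau>"]
    by simp
qed

lemma U_subset_vimage_iff: "\<tau> \<in> F \<Longrightarrow> \<rho> \<in> F \<Longrightarrow> U \<rho> \<subseteq> U \<tau> \<longleftrightarrow> U' \<rho> \<subseteq> U' \<tau>"
  using U_vimage[of \<tau>] U_vimage[of \<rho>] range_g vimage_subset_vimage_iff[of "U' \<rho>" g "U' \<tau>"] by simp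

lemma Uts_subset_vimage_iff:
  assumes "\<tau> \<in> F" "\<sigma> \<in> fst (c \<tau>)" "\<rho> \<in> fst (c \<tau>)"
  shows "Uts F U B \<tau> \<rho> \<subseteq> Uts F U B \<tau> \<sigma> \<longleftrightarrow> Uts F U' B' \<tau> \<rho> \<subseteq> Uts F U' B' \<tau> \<sigma>"
  using Uts_vimage[OF assms(1,2)] Uts_vimage[OF assms(1,3)] Uts_subset[OF assms(1)] range_g
    vimage_subset_vimage_iff[of "Uts F U' B' \<tau> \<rho>" g "Uts F U' B' \<tau> \<sigma>"] by simp

lemma UN_U_eq_vimage_iff: "(\<Union>\<tau>\<in>F. U \<tau>) = UNIV \<longleftrightarrow> (\<Union>\<tau>\<in>F. U' \<tau>) = T"
proof -
  have "(\<Union>\<tau>\<in>F. U \<tau>) = g -` (\<Union>\<tau>\<in>F. U' \<tau>)" "UNIV = g -` T"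
    using U_vimage range_g by auto
  moreover have "(\<Union>\<tau>\<in>F. U' \<tau>) \<subseteq> range g"
    using U_vimage range_g by blast
  ultimately show ?thesis
    using vimage_eq_vimage_iff[of "\<Union>\<tau>\<in>F. U' \<tau>" g T] range_g by simp
qed

lemma F_family_vimage_iff:
  assumes L0: "\<And>W. W \<subseteq> T \<Longrightarrow> g -` W \<in> M0 \<longleftrightarrow> W \<in> L0"
    and L1: "\<And>W. W \<subseteq> T \<Longrightarrow> g -` W \<in> M1 \<longleftrightarrow> W \<in> L1"
  shows "F_family UNIV M0 M1 F c U B \<longleftrightarrow> F_family T L0 L1 F c U' B'"
proof -
  have "(\<forall>\<tau>\<in>F. U \<tau> \<in> M0) \<longleftrightarrow> (\<forall>\<tau>\<in>F. U' \<tau> \<in> L0)"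
    using U_vimage L0 by auto
  moreover have "(\<forall>\<tau>\<in>F. \<forall>j. \<tau> @ [j] \<in> F \<longrightarrow> U (\<tau> @ [j]) \<subseteq> U \<tau>)
      \<longleftrightarrow> (\<forall>\<tau>\<in>F. \<forall>j. \<tau> @ [j] \<in> F \<longrightarrow> U' (\<tau> @ [j]) \<subseteq> U' \<tau>)"
    using U_subset_vimage_iff by blast
  moreover have "(\<forall>\<tau>\<in>F. \<forall>\<sigma>\<in>fst (c \<tau>). B \<tau> \<sigma> \<in> M1) \<longleftrightarrow> (\<forall>\<tau>\<in>F. \<forall>\<sigma>\<in>fst (c \<tau>). B' \<tau> \<sigma> \<in> L1)"
    using B_vimage L1 by auto
  moreover have "(\<forall>\<tau>\<in>F. \<forall>\<sigma>\<in>fst (c \<tau>). \<forall>j. \<sigma> @ [j] \<in> fst (c \<tau>) \<longrightarrow>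
        Uts F U B \<tau> (\<sigma> @ [j]) \<subseteq> Uts F U B \<tau> \<sigma>)
      \<longleftrightarrow> (\<forall>\<tau>\<in>F. \<forall>\<sigma>\<in>fst (c \<tau>). \<forall>j. \<sigma> @ [j] \<in> fst (c \<tau>) \<longrightarrow>
        Uts F U' B' \<tau> (\<sigma> @ [j]) \<subseteq> Uts F U' B' \<tau> \<sigma>)"
    using Uts_subset_vimage_iff by blast
  moreover have "(\<forall>\<tau>\<in>F. (\<Union>\<sigma>\<in>fst (c \<tau>). Uts F U B \<tau> \<sigma>) = Ut F U \<tau>)
      \<longleftrightarrow> (\<forall>\<tau>\<in>F. (\<Union>\<sigma>\<in>fst (c \<tau>). Uts F U' B' \<tau> \<sigma>) = Ut F U' \<tau>)"
    using UN_Uts_eq_Ut_vimage_iff by (rule ball_cong[OF refl])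
  ultimately show ?thesis
    unfolding F_family_def UN_U_eq_vimage_iff by argo
qed

lemma determines_vimage_iff: "determines F c U B (A \<circ> g) \<longleftrightarrow> determines F c U' B' A"
proof -
  let ?cell = "\<lambda>U B \<tau> \<sigma>. Uts F U B \<tau> \<sigma> - (\<Union>j\<in>{j. \<sigma> @ [j] \<in> fst (c \<tau>)}. Uts F U B \<tau> (\<sigma> @ [j]))"
  have cell: "x \<in> ?cell U B \<tau> \<sigma> \<longleftrightarrow> g x \<in> ?cell U' B' \<tau> \<sigma>"
    if "\<tau> \<in> F" "\<sigma> \<in> fst (c \<tau>)" for \<tau> \<sigma> x
    using that by (simp add: Uts_vimage)
  have cell_in_range: "y \<in> range g" if "\<tau> \<in> F" "y \<in> ?cell U' B' \<tau> \<sigma>" for \<tau> \<sigma> y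
    using that Uts_subset range_g by blast
  have "(\<forall>x. x \<in> ?cell U B \<tau> \<sigma> \<longrightarrow> A (g x) = v) \<longleftrightarrow> (\<forall>y. y \<in> ?cell U' B' \<tau> \<sigma> \<longrightarrow> A y = v)"
    if \<tau>\<sigma>: "\<tau> \<in> F" "\<sigma> \<in> fst (c \<tau>)" for \<tau> \<sigma> v
  proof
    assume H: "\<forall>x. x \<in> ?cell U B \<tau> \<sigma> \<longrightarrow> A (g x) = v"
    show "\<forall>y. y \<in> ?cell U' B' \<tau> \<sigma> \<longrightarrow> A y = v"
    proof (intro allI impI)
      fix y assume y: "y \<in> ?cell U' B' \<tau> \<sigma>"
      then obtain x where "y = g x"
        using cell_in_range[OF \<tau>\<sigma>(1) y] by blast
      then show "A y = v"
        using H cell[OF \<tau>\<sigma>] y by blast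
    qed
  next
    assume "\<forall>y. y \<in> ?cell U' B' \<tau> \<sigma> \<longrightarrow> A y = v"
    then show "\<forall>x. x \<in> ?cell U B \<tau> \<sigma> \<longrightarrow> A (g x) = v"
      using cell[OF \<tau>\<sigma>] by blast
  qed
  then show ?thesis
    unfolding determines_def by simp
qed

end

lemma finite_has_maximal_snoc:
  fixes X :: "'a list set"
  assumes "finite X" "X \<noteq> {}"
  obtains \<tau> where "\<tau> \<in> X" "\<And>j. \<tau> @ [j] \<notin> X"
proof -
  have "Max (length ` X) \<in> length ` X"
    using assms by simp
  then obtain \<tau> where "\<tau> \<in> X" "length \<tau> = Max (length ` X)"
    by auto
  moreover have "length \<rho> \<le> Max (length ` X)" if "\<rho> \<in> X" for \<rho>
    using assms that by simp
  ultimately show thesis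
    by (intro that[of \<tau>]) fastforce+
qed

lemma F_family_leaf_cell:
  assumes fam: "F_family S L0 L1 F c U B" and fin: "finite F" "\<And>\<tau>. \<tau> \<in> F \<Longrightarrow> finite (fst (c \<tau>))"
    and x: "x \<in> S"
  obtains \<tau> \<sigma> where "\<tau> \<in> F" "\<sigma> \<in> fst (c \<tau>)" "x \<in> Uts F U B \<tau> \<sigma>"
    "\<And>j. \<sigma> @ [j] \<in> fst (c \<tau>) \<Longrightarrow> x \<notin> Uts F U B \<tau> (\<sigma> @ [j])"
proof -
  have "{\<tau>\<in>F. x \<in> U \<tau>} \<noteq> {}"
    using fam x by (auto simp: F_family_def)
  then obtain \<tau> where \<tau>: "\<tau> \<in> F" "x \<in> U \<tau>" "\<And>j. \<tau> @ [j] \<notin> {\<tau>\<in>F. x \<in> U \<tau>}"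
    using finite_has_maximal_snoc[of "{\<tau>\<in>F. x \<in> U \<tau>}"] fin(1) by auto
  then have "x \<in> Ut F U \<tau>"
    by (auto simp: Ut_def)
  moreover have "(\<Union>\<sigma>\<in>fst (c \<tau>). Uts F U B \<tau> \<sigma>) = Ut F U \<tau>"
    using fam \<tau>(1) by (simp add: F_family_def)
  ultimately have "{\<sigma>\<in>fst (c \<tau>). x \<in> Uts F U B \<tau> \<sigma>} \<noteq> {}"
    by blast
  then obtain \<sigma> where "\<sigma> \<in> fst (c \<tau>)" "x \<in> Uts F U B \<tau> \<sigma>"
    "\<And>j. \<sigma> @ [j] \<notin> {\<sigma>\<in>fst (c \<tau>). x \<in> Uts F U B \<tau> \<sigma>}"
    using finite_has_maximal_snoc[of "{\<sigma>\<in>fst (c \<tau>). x \<in> Uts F U B \<tau> \<sigma>}"] fin(2)[OF \<tau>(1)] by auto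
  then show thesis
    using that \<tau>(1) by blast
qed

lemma determines_eq_if_same_cells:
  assumes fam: "F_family S L0 L1 F c U B" and fin: "finite F" "\<And>\<tau>. \<tau> \<in> F \<Longrightarrow> finite (fst (c \<tau>))"
    and det: "determines F c U B A" and "x \<in> S"
    and same_cells: "\<And>\<tau> \<sigma>. \<tau> \<in> F \<Longrightarrow> \<sigma> \<in> fst (c \<tau>) \<Longrightarrow> x \<in> Uts F U B \<tau> \<sigma> \<longleftrightarrow> y \<in> Uts F U B \<tau> \<sigma>"
  shows "A x = A y"
proof -
  obtain \<tau> \<sigma> where "\<tau> \<in> F" "\<sigma> \<in> fst (c \<tau>)" "x \<in> Uts F U B \<tau> \<sigma>"
    "\<And>j. \<sigma> @ [j] \<in> fst (c \<tau>) \<Longrightarrow> x \<notin> Uts F U B \<tau> (\<sigma> @ [j])"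
    using F_family_leaf_cell[OF fam fin \<open>x \<in> S\<close>] by blast
  then have "A x = snd (c \<tau>) \<sigma>" "A y = snd (c \<tau>) \<sigma>"
    using det same_cells unfolding determines_def by blast+
  then show ?thesis
    by simp
qed

section \<open>Partitions of words versus partitions of Muller classes\<close>

lemma range_inf_states: "range (inf_states f i) = CM f i"
  by (simp add: CM_def)

lemma Lpart_comp_inf_states:
  assumes a: "automaton Q f i" and A: "A \<in> Lpart (CM f i) (CM0 f i) (CM1 f i) k F c"
  shows "A \<circ> inf_states f i \<in> Lpart UNIV RSig0 RSig1 k F c"
proof -
  let ?g = "inf_states f i"
  obtain U' B' where bound: "\<forall>y\<in>CM f i. A y < k"
    and fam: "F_family (CM f i) (CM0 f i) (CM1 f i) F c U' B'" and det: "determines F c U' B' A"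
    using A unfolding Lpart_def by blast
  define U where "U \<tau> = ?g -` U' \<tau>" for \<tau>
  define B where "B \<tau> \<sigma> = ?g -` B' \<tau> \<sigma>" for \<tau> \<sigma>
  have U: "U \<tau> = ?g -` U' \<tau> \<and> U' \<tau> \<subseteq> CM f i" if "\<tau> \<in> F" for \<tau>
    using fam that unfolding F_family_def U_def by blast
  have B: "B \<tau> \<sigma> = ?g -` B' \<tau> \<sigma> \<and> B' \<tau> \<sigma> \<subseteq> CM f i" if "\<tau> \<in> F" "\<sigma> \<in> fst (c \<tau>)" for \<tau> \<sigma>
    using fam that unfolding F_family_def CM1_def up_sets_def B_def by blast
  have "F_family UNIV RSig0 RSig1 F c U B"
    using fam by (subst F_family_vimage_iff[OF range_inf_states U B])
      (simp_all add: vimage_inf_states_RSig0_iff[OF a] vimage_inf_states_RSig1_iff[OF a])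
  moreover have "determines F c U B (A \<circ> ?g)"
    using det by (simp only: determines_vimage_iff[OF range_inf_states U B])
  moreover have "\<forall>x. (A \<circ> ?g) x < k"
    using bound by (simp add: CM_def)
  ultimately show ?thesis
    unfolding Lpart_def by blast
qed

lemma Lpart_factor_inf_states:
  assumes a: "automaton Q f i"
    and fin: "finite F" "\<And>\<tau>. \<tau> \<in> F \<Longrightarrow> finite (fst (c \<tau>))"
    and fam: "F_family UNIV RSig0 RSig1 F c U B" and det: "determines F c U B A" and bound: "\<And>x. A x < k"
    and U_sat: "\<And>\<tau>. \<tau> \<in> F \<Longrightarrow> \<exists>W. U \<tau> = inf_states f i -` W"
    and B_sat: "\<And>\<tau> \<sigma>. \<tau> \<in> F \<Longrightarrow> \<sigma> \<in> fst (c \<tau>) \<Longrightarrow> \<exists>W. B \<tau> \<sigma> = inf_states f i -` W"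
  shows "\<exists>A'. A = A' \<circ> inf_states f i \<and> A' \<in> Lpart (CM f i) (CM0 f i) (CM1 f i) k F c"
proof -
  let ?g = "inf_states f i"
  define U' where "U' \<tau> = ?g ` U \<tau>" for \<tau>
  define B' where "B' \<tau> \<sigma> = ?g ` B \<tau> \<sigma>" for \<tau> \<sigma>
  have U: "U \<tau> = ?g -` U' \<tau> \<and> U' \<tau> \<subseteq> CM f i" if "\<tau> \<in> F" for \<tau>
    using U_sat[OF that] by (auto simp: CM_def U'_def)
  have B: "B \<tau> \<sigma> = ?g -` B' \<tau> \<sigma> \<and> B' \<tau> \<sigma> \<subseteq> CM f i" if "\<tau> \<in> F" "\<sigma> \<in> fst (c \<tau>)" for \<tau> \<sigma>
    using B_sat[OF that] by (auto simp: CM_def B'_def)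
  define A' where "A' = A \<circ> inv ?g"
  text \<open>Each cell of the family is a union of fibres of \<open>?g\<close>, and A is determined by the leaf
    cell containing a word, so A is constant on fibres.\<close>
  have "A x = A (inv ?g (?g x))" for x
  proof (rule determines_eq_if_same_cells[OF fam fin det UNIV_I])
    fix \<tau> \<sigma> assume "\<tau> \<in> F" "\<sigma> \<in> fst (c \<tau>)"
    moreover have "?g (inv ?g (?g x)) = ?g x"
      by (simp add: f_inv_into_f)
    ultimately show "x \<in> Uts F U B \<tau> \<sigma> \<longleftrightarrow> inv ?g (?g x) \<in> Uts F U B \<tau> \<sigma>"
      by (simp add: Uts_vimage[OF range_inf_states U B])
  qed
  then have A: "A = A' \<circ> ?g"
    by (auto simp: A'_def)
  have "F_family (CM f i) (CM0 f i) (CM1 f i) F c U' B'"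
    using fam by (subst F_family_vimage_iff[OF range_inf_states U B, symmetric])
      (simp_all add: vimage_inf_states_RSig0_iff[OF a] vimage_inf_states_RSig1_iff[OF a])
  moreover have "determines F c U' B' A'"
    using det unfolding A by (simp only: determines_vimage_iff[OF range_inf_states U B])
  moreover have "\<forall>y\<in>CM f i. A' y < k"
    using bound by (simp add: A'_def)
  ultimately show ?thesis
    using A unfolding Lpart_def by blast
qed

lemma Lpart_RSig_factor:
  fixes A :: "(nat \<Rightarrow> 'a) \<Rightarrow> nat"
  assumes forest: "forest_Tk k F c" and A: "A \<in> Lpart UNIV RSig0 RSig1 k F c"
  shows "\<exists>Q (f :: nat \<Rightarrow> 'a \<Rightarrow> nat) i A'.
    automaton Q f i \<and> A = A' \<circ> inf_states f i \<and> A' \<in> Lpart (CM f i) (CM0 f i) (CM1 f i) k F c"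
proof -
  obtain U B where fam: "F_family UNIV RSig0 RSig1 F c U B" and det: "determines F c U B A"
    and bound: "\<And>x. A x < k"
    using A unfolding Lpart_def by blast
  have fin: "finite F" "\<And>\<tau>. \<tau> \<in> F \<Longrightarrow> finite (fst (c \<tau>))"
    using forest by (auto simp: forest_Tk_def forest_def tree_def)
  let ?LL = "U ` F \<union> (\<Union>\<tau>\<in>F. B \<tau> ` fst (c \<tau>))"
  have LL: "finite ?LL" "\<forall>L\<in>?LL. regular_omega L"
    using fin fam by (auto simp: F_family_def RSig0_def RSig1_def)
  obtain Q and f :: "nat \<Rightarrow> 'a \<Rightarrow> nat" and i
    where a: "automaton Q f i" and sat: "\<forall>L\<in>?LL. \<exists>W. L = inf_states f i -` W"
    using regular_omega_common_automaton[OF LL] by (elim exE conjE) (rule that)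
  have "\<exists>W. U \<tau> = inf_states f i -` W" if "\<tau> \<in> F" for \<tau>
    using sat that by blast
  moreover have "\<exists>W. B \<tau> \<sigma> = inf_states f i -` W" if "\<tau> \<in> F" "\<sigma> \<in> fst (c \<tau>)" for \<tau> \<sigma>
    using sat that by blast
  ultimately obtain A' where "A = A' \<circ> inf_states f i" "A' \<in> Lpart (CM f i) (CM0 f i) (CM1 f i) k F c"
    using Lpart_factor_inf_states[OF a fin fam det bound] by blast
  then show ?thesis
    using a by blast
qed

theorem proposition4p15:
  fixes k :: nat and F :: "nat list set" and c :: "nat list \<Rightarrow> ltree"
  assumes "card (UNIV :: 'a::finite set) \<ge> 2"
    and "k \<ge> 2"
    and "forest_Tk k F c"
  shows "Lpart (UNIV :: (nat \<Rightarrow> 'a) set) RSig0 RSig1 k F c =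
    {A \<circ> inf_states f i | Q (f :: nat \<Rightarrow> 'a \<Rightarrow> nat) i A.
       automaton Q f i \<and> A \<in> Lpart (CM f i) (CM0 f i) (CM1 f i) k F c}"
proof (intro set_eqI iffI)
  fix A :: "(nat \<Rightarrow> 'a) \<Rightarrow> nat"
  assume "A \<in> Lpart UNIV RSig0 RSig1 k F c"
  then obtain Q and f :: "nat \<Rightarrow> 'a \<Rightarrow> nat" and i A' where
    "automaton Q f i" "A = A' \<circ> inf_states f i" "A' \<in> Lpart (CM f i) (CM0 f i) (CM1 f i) k F c"
    using Lpart_RSig_factor[OF assms(3)] by blast
  then show "A \<in> {A \<circ> inf_states f i | Q (f :: nat \<Rightarrow> 'a \<Rightarrow> nat) i A.
      automaton Q f i \<and> A \<in> Lpart (CM f i) (CM0 f i) (CM1 f i) k F c}"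
    by blast
next
  fix A :: "(nat \<Rightarrow> 'a) \<Rightarrow> nat"
  assume "A \<in> {A \<circ> inf_states f i | Q (f :: nat \<Rightarrow> 'a \<Rightarrow> nat) i A.
      automaton Q f i \<and> A \<in> Lpart (CM f i) (CM0 f i) (CM1 f i) k F c}"
  then show "A \<in> Lpart UNIV RSig0 RSig1 k F c"
    using Lpart_comp_inf_states by blast
qed

end
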